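(* The two-step nilpotent Lie algebra $N$ is decomposable if and only if there are bases $\hat X$ and $\hat I$ such that the generating hypergraph $G$ is not connected.
   Context: Let $N$ be a two-step nilpotent Lie algebra over the complex numbers with a set of $q$ generators $\hat X = \{ \mathbf{x}_1, \cdots, \mathbf{x}_q \}$, and with center $I$ having a basis $\hat I = \{ \mathbf{y}_1, \cdots, \mathbf{y}_p \}$. Let $X = \mathrm{Span}\, \hat X$, so that $N = X \oplus I$, and assume $q, p \ge 2$ (so $\dim N = q+p$). The generating hypergraph $G$ of $N$ (with respect to these bases) is the bipartite hypergraph with the two vertex sets $\hat X$ and $\hat I$, where, whenever $[\mathbf{x}_i, \mathbf{x}_j] = \sum_{k=1}^p \alpha_k \mathbf{y}_k$ with not all $\alpha_k$ zero, $G$ has the multi-vertex hyper-edge $(\mathbf{x}_i, \mathbf{x}_j; \mathbf{y}_k : \alpha_k \neq 0)$. It is assumed that each $\mathbf{y}_k$ lies in at least one three-vertex hyper-edge $(\mathbf{x}_i, \mathbf{x}_j, \mathbf{y}_k)$ (achievable by a linear change of basis of $I$). *)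

theory Defs
  imports Complex_Main
begin

definition lie_algebra :: "(complex \<Rightarrow> 'v::ab_group_add \<Rightarrow> 'v) \<Rightarrow> ('v \<Rightarrow> 'v \<Rightarrow> 'v) \<Rightarrow> bool" where
  "lie_algebra s br \<longleftrightarrow> vector_space s \<and>
     (\<forall>a b c. br (a + b) c = br a c + br b c) \<and>
     (\<forall>a b c. br a (b + c) = br a b + br a c) \<and>
     (\<forall>r a b. br (s r a) b = s r (br a b)) \<and>
     (\<forall>r a b. br a (s r b) = s r (br a b)) \<and>
     (\<forall>a. br a a = 0) \<and>
     (\<forall>a b c. br a (br b c) + br b (br c a) + br c (br a b) = 0)"

definition two_step_nilpotent :: "('v::ab_group_add \<Rightarrow> 'v \<Rightarrow> 'v) \<Rightarrow> bool" where
  "two_step_nilpotent br \<longleftrightarrow> (\<forall>a b c. br (br a b) c = 0) \<and> (\<exists>a b. br a b \<noteq> 0)"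

definition lie_center :: "('v::ab_group_add \<Rightarrow> 'v \<Rightarrow> 'v) \<Rightarrow> 'v set" where
  "lie_center br = {z. \<forall>a. br z a = 0}"

definition lie_ideal :: "(complex \<Rightarrow> 'v::ab_group_add \<Rightarrow> 'v) \<Rightarrow> ('v \<Rightarrow> 'v \<Rightarrow> 'v) \<Rightarrow> 'v set \<Rightarrow> bool" where
  "lie_ideal s br J \<longleftrightarrow> module.subspace s J \<and> (\<forall>a b. b \<in> J \<longrightarrow> br a b \<in> J)"

definition decomposable :: "(complex \<Rightarrow> 'v::ab_group_add \<Rightarrow> 'v) \<Rightarrow> ('v \<Rightarrow> 'v \<Rightarrow> 'v) \<Rightarrow> bool" where
  "decomposable s br \<longleftrightarrow> (\<exists>A B. lie_ideal s br A \<and> lie_ideal s br B \<and> A \<noteq> {0} \<and> B \<noteq> {0} \<and>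
      A \<inter> B = {0} \<and> {a + b | a b. a \<in> A \<and> b \<in> B} = UNIV)"

text \<open>x 0..x (q-1) together with y 0..y (p-1) form a basis of N (so X = span of the x's is a
  complement of I), and the y's form a basis of the center I.\<close>
definition adapted_bases :: "(complex \<Rightarrow> 'v::ab_group_add \<Rightarrow> 'v) \<Rightarrow> ('v \<Rightarrow> 'v \<Rightarrow> 'v) \<Rightarrow> nat \<Rightarrow> nat \<Rightarrow>
    (nat \<Rightarrow> 'v) \<Rightarrow> (nat \<Rightarrow> 'v) \<Rightarrow> bool" where
  "adapted_bases s br q p x y \<longleftrightarrow>
     inj_on x {..<q} \<and> inj_on y {..<p} \<and> x ` {..<q} \<inter> y ` {..<p} = {} \<and>
     \<not> module.dependent s (x ` {..<q} \<union> y ` {..<p}) \<and>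
     module.span s (x ` {..<q} \<union> y ` {..<p}) = UNIV \<and>
     module.span s (y ` {..<p}) = lie_center br"

definition bracket_coeff :: "(complex \<Rightarrow> 'v::ab_group_add \<Rightarrow> 'v) \<Rightarrow> ('v \<Rightarrow> 'v \<Rightarrow> 'v) \<Rightarrow> nat \<Rightarrow>
    (nat \<Rightarrow> 'v) \<Rightarrow> (nat \<Rightarrow> 'v) \<Rightarrow> nat \<Rightarrow> nat \<Rightarrow> nat \<Rightarrow> complex" where
  "bracket_coeff s br p x y i j k = module.representation s (y ` {..<p}) (br (x i) (x j)) (y k)"

text \<open>Generating hypergraph: vertices Inl i (for x_i) and Inr k (for y_k).\<close>
definition gen_vertices :: "nat \<Rightarrow> nat \<Rightarrow> (nat + nat) set" where
  "gen_vertices q p = Inl ` {..<q} \<union> Inr ` {..<p}"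

definition gen_hyperedges :: "(complex \<Rightarrow> 'v::ab_group_add \<Rightarrow> 'v) \<Rightarrow> ('v \<Rightarrow> 'v \<Rightarrow> 'v) \<Rightarrow> nat \<Rightarrow> nat \<Rightarrow>
    (nat \<Rightarrow> 'v) \<Rightarrow> (nat \<Rightarrow> 'v) \<Rightarrow> (nat + nat) set set" where
  "gen_hyperedges s br q p x y =
     {{Inl i, Inl j} \<union> Inr ` {k. k < p \<and> bracket_coeff s br p x y i j k \<noteq> 0} | i j.
        i < q \<and> j < q \<and> (\<exists>k<p. bracket_coeff s br p x y i j k \<noteq> 0)}"

definition hypergraph_connected :: "'a set \<Rightarrow> 'a set set \<Rightarrow> bool" where
  "hypergraph_connected V E \<longleftrightarrow>
     (\<forall>u\<in>V. \<forall>w\<in>V. (u, w) \<in> {(a, b). \<exists>e\<in>E. a \<in> e \<and> b \<in> e}\<^sup>*)"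

text \<open>Standing assumption: every y_k lies in a three-vertex hyperedge (x_i, x_j, y_k).\<close>
definition three_vertex_condition :: "(complex \<Rightarrow> 'v::ab_group_add \<Rightarrow> 'v) \<Rightarrow> ('v \<Rightarrow> 'v \<Rightarrow> 'v) \<Rightarrow> nat \<Rightarrow> nat \<Rightarrow>
    (nat \<Rightarrow> 'v) \<Rightarrow> (nat \<Rightarrow> 'v) \<Rightarrow> bool" where
  "three_vertex_condition s br q p x y \<longleftrightarrow>
     (\<forall>k<p. \<exists>i<q. \<exists>j<q. {k'. k' < p \<and> bracket_coeff s br p x y i j k' \<noteq> 0} = {k})"

end

theory Submission
  imports Defs
begin

text \<open>
  If the generating hypergraph is disconnected, split its vertices into a union of connected
  components K and the rest. A bracket [x_i, x_j] is a combination of the y_k lying in the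
  hyperedge through x_i and x_j, so the basis vectors indexed by K span an ideal, and so do
  the remaining ones; N is their direct sum.

  Conversely, let N = A \<oplus> B with nonzero ideals. Then [A, B] = 0 and the centre Z splits as
  (Z \<inter> A) \<oplus> (Z \<inter> B). The three-vertex condition gives Z \<subseteq> [N, N], hence Z \<inter> A \<subseteq> [A, A].
  Extend a basis of Z \<inter> A to a basis of A and replace its central part by a maximal independent
  family of brackets of the remaining vectors; do the same in B. A dimension count shows that
  the result is again an adapted basis of N. Every new y_k is a single bracket [x_i, x_j], so
  the three-vertex condition holds, and every hyperedge lies inside A or inside B, so the new
  hypergraph is disconnected.
\<close>

lemma not_hypergraph_connected_iff:
  assumes "\<And>e. e \<in> E \<Longrightarrow> e \<subseteq> V"
  shows "\<not> hypergraph_connected V E \<longleftrightarrow>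
    (\<exists>K\<subseteq>V. K \<noteq> {} \<and> K \<noteq> V \<and> (\<forall>e\<in>E. e \<subseteq> K \<or> e \<inter> K = {}))"
proof
  define R where "R = {(a, b). \<exists>e\<in>E. a \<in> e \<and> b \<in> e}"
  assume "\<not> hypergraph_connected V E"
  then obtain u w where u: "u \<in> V" and w: "w \<in> V" and "(u, w) \<notin> R\<^sup>*"
    unfolding hypergraph_connected_def R_def by blast
  define K where "K = {v. (u, v) \<in> R\<^sup>*}"
  have "e \<subseteq> K \<or> e \<inter> K = {}" if "e \<in> E" for e
    using that by (auto simp: K_def R_def intro: rtrancl_into_rtrancl)
  moreover have "v \<in> V" if "(u, v) \<in> R\<^sup>*" for v
    using that by induction (use u assms in \<open>auto simp: R_def\<close>)
  then have "K \<subseteq> V"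
    by (auto simp: K_def)
  ultimately show "\<exists>K\<subseteq>V. K \<noteq> {} \<and> K \<noteq> V \<and> (\<forall>e\<in>E. e \<subseteq> K \<or> e \<inter> K = {})"
    using w \<open>(u, w) \<notin> R\<^sup>*\<close> by (intro exI[of _ K]) (auto simp: K_def)
next
  assume "\<exists>K\<subseteq>V. K \<noteq> {} \<and> K \<noteq> V \<and> (\<forall>e\<in>E. e \<subseteq> K \<or> e \<inter> K = {})"
  then obtain K u w where K: "K \<subseteq> V" "\<forall>e\<in>E. e \<subseteq> K \<or> e \<inter> K = {}"
    and u: "u \<in> K" and w: "w \<in> V" "w \<notin> K"
    by blast
  have "v \<in> K" if "(u, v) \<in> {(a, b). \<exists>e\<in>E. a \<in> e \<and> b \<in> e}\<^sup>*" for v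
    using that
  proof induction
    case (step a b)
    then obtain e where "e \<in> E" "a \<in> e" "b \<in> e"
      by blast
    then show ?case
      using step.IH K(2) by blast
  qed (rule u)
  then show "\<not> hypergraph_connected V E"
    using u w K(1) unfolding hypergraph_connected_def by blast
qed

lemma image_case_sum_gen_vertices:
  "case_sum x y ` gen_vertices q p = x ` {..<q} \<union> y ` {..<p}"
  by (simp add: gen_vertices_def image_Un image_image)

lemma inj_on_case_sum_gen_vertices:
  assumes "inj_on x {..<q}" "inj_on y {..<p}" "x ` {..<q} \<inter> y ` {..<p} = {}"
  shows "inj_on (case_sum x y) (gen_vertices q p)"
  using assms by (fastforce simp: gen_vertices_def inj_on_def)

lemma gen_hyperedges_subset_vertices:
  "e \<in> gen_hyperedges s br q p x y \<Longrightarrow> e \<subseteq> gen_vertices q p"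
  by (auto simp: gen_hyperedges_def gen_vertices_def)

lemma not_hypergraph_connected_gen_iff:
  "\<not> hypergraph_connected (gen_vertices q p) (gen_hyperedges s br q p x y) \<longleftrightarrow>
    (\<exists>K\<subseteq>gen_vertices q p. K \<noteq> {} \<and> K \<noteq> gen_vertices q p \<and>
      (\<forall>e\<in>gen_hyperedges s br q p x y. e \<subseteq> K \<or> e \<inter> K = {}))"
  by (rule not_hypergraph_connected_iff) (rule gen_hyperedges_subset_vertices)

lemma gen_hyperedgesE:
  assumes "e \<in> gen_hyperedges s br q p x y"
  obtains i j where "i < q" "j < q" "\<exists>k<p. bracket_coeff s br p x y i j k \<noteq> 0"
    "e = {Inl i, Inl j} \<union> Inr ` {k. k < p \<and> bracket_coeff s br p x y i j k \<noteq> 0}"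
  using assms unfolding gen_hyperedges_def mem_Collect_eq by blast

lemma gen_hyperedgeI:
  assumes "k < p" "bracket_coeff s br p x y i j k \<noteq> 0" "i < q" "j < q"
  shows "{Inl i, Inl j} \<union> Inr ` {k. k < p \<and> bracket_coeff s br p x y i j k \<noteq> 0}
    \<in> gen_hyperedges s br q p x y"
  unfolding gen_hyperedges_def mem_Collect_eq
  by (rule exI[of _ i], rule exI[of _ j]) (use assms in auto)

lemma bracket_coeff_support_subset_separated:
  assumes "\<forall>e\<in>gen_hyperedges s br q p x y. e \<subseteq> K \<or> e \<inter> K = {}"
    "i < q" "j < q" "Inl j \<in> K"
  shows "Inr ` {k. k < p \<and> bracket_coeff s br p x y i j k \<noteq> 0} \<subseteq> K"
    (is "Inr ` ?S \<subseteq> K")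
proof (cases "?S = {}")
  case True
  then show ?thesis
    by (simp only: image_empty empty_subsetI)
next
  case False
  then obtain k where "k < p" "bracket_coeff s br p x y i j k \<noteq> 0"
    by blast
  then have "{Inl i, Inl j} \<union> Inr ` ?S \<in> gen_hyperedges s br q p x y"
    using assms(2,3) by (rule gen_hyperedgeI)
  then have "{Inl i, Inl j} \<union> Inr ` ?S \<subseteq> K \<or> ({Inl i, Inl j} \<union> Inr ` ?S) \<inter> K = {}"
    using assms(1) by (rule bspec[rotated])
  moreover have "Inl j \<in> ({Inl i, Inl j} \<union> Inr ` ?S) \<inter> K"
    using assms(4) by simp
  ultimately show ?thesis
    by blast
qed

context vector_space
begin

lemma span_Int_span_eq_zero:
  assumes "independent (S \<union> T)" "S \<inter> T = {}"
  shows "span S \<inter> span T = {0}"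
proof -
  have "z = 0" if z: "z \<in> span S" "z \<in> span T" for z
  proof -
    have rep_S: "representation (S \<union> T) z = representation S z"
      and rep_T: "representation (S \<union> T) z = representation T z"
      by (rule representation_extend[OF assms(1)]; use z in auto)+
    have zero: "representation (S \<union> T) z b = 0" for b
    proof (cases "b \<in> S")
      case True
      then have "b \<notin> T"
        using assms(2) by blast
      then show ?thesis
        unfolding rep_T using representation_ne_zero by blast
    next
      case False
      then show ?thesis
        unfolding rep_S using representation_ne_zero by blast
    qed
    have "z \<in> span (S \<union> T)"
      using z(1) span_mono[of S "S \<union> T"] by auto
    then show "z = 0"
      using sum_nonzero_representation_eq[OF assms(1), of z] by (simp add: zero)
  qed
  then show ?thesis
    using span_zero by blast
qed

lemma extend_Int_basis:
  obtains X W where "X \<subseteq> A" "X \<inter> Z = {}" "W \<subseteq> Z \<inter> A" "independent (X \<union> W)"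
    "A \<subseteq> span (X \<union> W)" "Z \<inter> A \<subseteq> span W"
proof -
  obtain W where W: "W \<subseteq> Z \<inter> A" "independent W" "Z \<inter> A \<subseteq> span W"
    by (rule maximal_independent_subset)
  have "W \<subseteq> A"
    using W(1) by blast
  then obtain B where B: "W \<subseteq> B" "B \<subseteq> A" "independent B" "A \<subseteq> span B"
    using maximal_independent_subset_extend W(2) by metis
  have "v \<notin> Z" if v: "v \<in> B - W" for v
  proof
    assume "v \<in> Z"
    then have "v \<in> span W"
      using v W(3) B(2) by blast
    moreover have "W \<subseteq> B - {v}"
      using v B(1) by blast
    ultimately have "v \<in> span (B - {v})"
      using span_mono by blast
    then show False
      using v B(3) dependent_def by blast
  qed
  then have "(B - W) \<inter> Z = {}"
    by blast
  moreover have "B - W \<union> W = B"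
    using B(1) by blast
  ultimately show ?thesis
    using B(2-4) W(1,3) by (intro that[of "B - W" W]) auto
qed

end

text \<open>The Jacobi identity is not assumed: it follows from bracket_bracket.\<close>

locale two_step_lie_algebra = finite_dimensional_vector_space scale Basis
  for scale :: "complex \<Rightarrow> 'v::ab_group_add \<Rightarrow> 'v" (infixr \<open>*s\<close> 75) and Basis +
  fixes br :: "'v \<Rightarrow> 'v \<Rightarrow> 'v"
  assumes bracket_add_left: "br (a + b) c = br a c + br b c"
    and bracket_add_right: "br a (b + c) = br a b + br a c"
    and bracket_scale_left: "br (r *s a) b = r *s br a b"
    and bracket_scale_right: "br a (r *s b) = r *s br a b"
    and bracket_self: "br a a = 0"
    and bracket_bracket: "br (br a b) c = 0"
begin

lemma bracket_zero_left [simp]: "br 0 b = 0"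
  using bracket_add_left[of 0 0 b] by simp

lemma bracket_zero_right [simp]: "br a 0 = 0"
  using bracket_add_right[of a 0 0] by simp

lemma bracket_antisym: "br a b = - br b a"
proof -
  have "0 = br (a + b) (a + b)"
    by (simp add: bracket_self)
  also have "\<dots> = br a a + br b a + (br a b + br b b)"
    by (simp only: bracket_add_left bracket_add_right)
  also have "\<dots> = br a b + br b a"
    by (simp add: bracket_self)
  finally show ?thesis
    by (metis eq_neg_iff_add_eq_0)
qed

lemma bracket_span_in_subspace:
  assumes "subspace U" "\<And>u v. u \<in> S \<Longrightarrow> v \<in> T \<Longrightarrow> br u v \<in> U"
    and "a \<in> span S" "b \<in> span T"
  shows "br a b \<in> U"
proof -
  have left: "br u b \<in> U" if "u \<in> S" for u
    using \<open>b \<in> span T\<close>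
    by (induction rule: span_induct_alt)
      (use assms(1,2) that in \<open>auto simp: bracket_add_right bracket_scale_right
        subspace_0 subspace_add subspace_scale\<close>)
  from \<open>a \<in> span S\<close> show ?thesis
    by (induction rule: span_induct_alt)
      (use assms(1) left in \<open>auto simp: bracket_add_left bracket_scale_left
        subspace_0 subspace_add subspace_scale\<close>)
qed

lemma subspace_lie_center: "subspace (lie_center br)"
  unfolding subspace_def lie_center_def by (simp add: bracket_add_left bracket_scale_left)

lemma bracket_center_left: "z \<in> lie_center br \<Longrightarrow> br z a = 0"
  by (simp add: lie_center_def)

lemma bracket_center_right: "z \<in> lie_center br \<Longrightarrow> br a z = 0"
  by (metis bracket_antisym bracket_center_left)

lemma bracket_in_center: "br a b \<in> lie_center br"
  by (simp add: lie_center_def bracket_bracket)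

definition brackets :: "'v set \<Rightarrow> 'v set" where
  "brackets S = {br a b | a b. a \<in> S \<and> b \<in> S}"

definition ideal_direct_sum :: "'v set \<Rightarrow> 'v set \<Rightarrow> bool" where
  "ideal_direct_sum A B \<longleftrightarrow> lie_ideal scale br A \<and> lie_ideal scale br B \<and> A \<inter> B = {0} \<and>
     (\<forall>v. \<exists>a\<in>A. \<exists>b\<in>B. v = a + b)"

lemma decomposable_iff_ideal_direct_sum:
  "decomposable scale br \<longleftrightarrow> (\<exists>A B. ideal_direct_sum A B \<and> A \<noteq> {0} \<and> B \<noteq> {0})"
proof -
  have sum_eq_UNIV: "{a + b | a b. a \<in> A \<and> b \<in> B} = UNIV \<longleftrightarrow> (\<forall>v. \<exists>a\<in>A. \<exists>b\<in>B. v = a + b)"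
    for A B :: "'v set"
    by blast
  show ?thesis
    unfolding decomposable_def ideal_direct_sum_def sum_eq_UNIV by blast
qed

lemma ideal_direct_sumE:
  assumes "ideal_direct_sum A B"
  obtains a b where "a \<in> A" "b \<in> B" "v = a + b"
  using assms unfolding ideal_direct_sum_def by blast

lemma ideal_direct_sum_commute: "ideal_direct_sum A B \<Longrightarrow> ideal_direct_sum B A"
  unfolding ideal_direct_sum_def by (metis add.commute inf_commute)

lemma lie_ideal_subspace: "lie_ideal scale br A \<Longrightarrow> subspace A"
  by (simp add: lie_ideal_def)

lemma lie_ideal_bracket_right: "lie_ideal scale br A \<Longrightarrow> b \<in> A \<Longrightarrow> br a b \<in> A"
  by (simp add: lie_ideal_def)

lemma lie_ideal_bracket_left: "lie_ideal scale br A \<Longrightarrow> a \<in> A \<Longrightarrow> br a b \<in> A"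
  by (metis bracket_antisym lie_ideal_bracket_right lie_ideal_subspace subspace_neg)

lemma lie_ideal_spanI:
  assumes "span T = UNIV" "\<And>u w. u \<in> T \<Longrightarrow> w \<in> S \<Longrightarrow> br u w \<in> span S"
  shows "lie_ideal scale br (span S)"
  unfolding lie_ideal_def
proof (intro conjI allI impI subspace_span)
  fix a b assume "b \<in> span S"
  moreover have "a \<in> span T"
    using assms(1) by simp
  ultimately show "br a b \<in> span S"
    by (intro bracket_span_in_subspace[OF subspace_span assms(2)])
qed

lemma ideal_direct_sum_bracket_eq_zero:
  assumes "ideal_direct_sum A B" "a \<in> A" "b \<in> B"
  shows "br a b = 0"
  using assms lie_ideal_bracket_left lie_ideal_bracket_right
  unfolding ideal_direct_sum_def by blast

lemma ideal_direct_sum_dim: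
  assumes "ideal_direct_sum A B"
  shows "dim A + dim B = dim (UNIV :: 'v set)"
proof -
  have "{a + b | a b. a \<in> A \<and> b \<in> B} = UNIV" "A \<inter> B = {0}"
    using assms unfolding ideal_direct_sum_def by blast+
  then show ?thesis
    using dim_sums_Int[of A B] assms
    by (simp add: ideal_direct_sum_def lie_ideal_subspace)
qed

lemma ideal_direct_sum_center_component:
  assumes "ideal_direct_sum A B" "a + b \<in> lie_center br" "a \<in> A" "b \<in> B"
  shows "a \<in> lie_center br"
proof -
  have "br a c = 0" for c
  proof -
    have "br a c + br b c = 0"
      using assms(2) by (simp add: bracket_center_left flip: bracket_add_left)
    then have "br a c = - br b c"
      by (simp add: eq_neg_iff_add_eq_0)
    moreover have "br a c \<in> A" "- br b c \<in> B"
      using assms lie_ideal_bracket_left lie_ideal_subspace subspace_neg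
      unfolding ideal_direct_sum_def by blast+
    ultimately have "br a c \<in> A \<inter> B"
      by simp
    then show ?thesis
      using assms(1) unfolding ideal_direct_sum_def by blast
  qed
  then show ?thesis
    by (simp add: lie_center_def)
qed

lemma brackets_mono: "S \<subseteq> T \<Longrightarrow> brackets S \<subseteq> brackets T"
  unfolding brackets_def by blast

lemma brackets_subset_center_Int_ideal:
  assumes "lie_ideal scale br A" "X \<subseteq> A"
  shows "brackets X \<subseteq> lie_center br \<inter> A"
  using assms bracket_in_center lie_ideal_bracket_right by (auto simp: brackets_def)

lemma span_brackets_subset_ideal: "lie_ideal scale br A \<Longrightarrow> span (brackets A) \<subseteq> A"
  using brackets_subset_center_Int_ideal
  by (metis inf.boundedE lie_ideal_subspace order_refl span_minimal)

lemma ideal_direct_sum_brackets_subset: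
  assumes "ideal_direct_sum A B"
  shows "brackets UNIV \<subseteq> span (brackets A \<union> brackets B)"
proof -
  have "br a b \<in> span (brackets A \<union> brackets B)" for a b
  proof -
    obtain a1 a2 b1 b2 where ab: "a1 \<in> A" "a2 \<in> B" "a = a1 + a2" "b1 \<in> A" "b2 \<in> B" "b = b1 + b2"
      using ideal_direct_sumE[OF assms, of a] ideal_direct_sumE[OF assms, of b] by metis
    then have "br a1 b2 = 0" "br a2 b1 = 0"
      using ideal_direct_sum_bracket_eq_zero[OF assms]
        ideal_direct_sum_bracket_eq_zero[OF ideal_direct_sum_commute[OF assms]]
      by blast+
    then have "br a b = br a1 b1 + br a2 b2"
      using ab by (simp add: bracket_add_left bracket_add_right)
    moreover have "br a1 b1 \<in> brackets A" "br a2 b2 \<in> brackets B"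
      using ab by (auto simp: brackets_def)
    ultimately show ?thesis
      by (simp add: span_add span_base)
  qed
  then show ?thesis
    by (auto simp: brackets_def)
qed

lemma ideal_direct_sum_center_Int_subset:
  assumes "ideal_direct_sum A B" "lie_center br \<subseteq> span (brackets UNIV)"
  shows "lie_center br \<inter> A \<subseteq> span (brackets A)"
proof
  fix z assume z: "z \<in> lie_center br \<inter> A"
  have "span (brackets UNIV) \<subseteq> span (brackets A \<union> brackets B)"
    using ideal_direct_sum_brackets_subset[OF assms(1)] by (rule span_minimal[OF _ subspace_span])
  then have "z \<in> span (brackets A \<union> brackets B)"
    using z assms(2) by blast
  then obtain \<alpha> \<beta> where \<alpha>: "\<alpha> \<in> span (brackets A)" and \<beta>: "\<beta> \<in> span (brackets B)"
    and z_eq: "z = \<alpha> + \<beta>"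
    unfolding span_Un by blast
  have A: "lie_ideal scale br A" and B: "lie_ideal scale br B" and AB: "A \<inter> B = {0}"
    using assms(1) by (auto simp: ideal_direct_sum_def)
  have "z - \<alpha> \<in> A"
    using z \<alpha> span_brackets_subset_ideal[OF A] subspace_diff[OF lie_ideal_subspace[OF A]]
    by blast
  moreover have "\<beta> \<in> B"
    using \<beta> span_brackets_subset_ideal[OF B] by blast
  ultimately have "\<beta> = 0"
    using AB z_eq by auto
  then show "z \<in> span (brackets A)"
    using z_eq \<alpha> by simp
qed

lemma brackets_subset_span_brackets:
  assumes "A \<subseteq> span (X \<union> W)" "W \<subseteq> lie_center br"
  shows "brackets A \<subseteq> span (brackets X)"
proof -
  have generators: "br u v \<in> span (brackets X)" if "u \<in> X \<union> W" "v \<in> X \<union> W" for u v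
    using that assms(2) bracket_center_left bracket_center_right
    by (auto simp: brackets_def span_zero intro: span_base)
  have "br a b \<in> span (brackets X)" if "a \<in> A" "b \<in> A" for a b
    by (rule bracket_span_in_subspace[OF subspace_span generators]) (use assms(1) that in blast)+
  then show ?thesis
    unfolding brackets_def[of A] by blast
qed

lemma ideal_direct_sum_center_Int_subset_span_brackets:
  assumes "ideal_direct_sum A B" "lie_center br \<subseteq> span (brackets UNIV)"
    "A \<subseteq> span (X \<union> W)" "W \<subseteq> lie_center br"
  shows "lie_center br \<inter> A \<subseteq> span (brackets X)"
proof -
  have "span (brackets A) \<subseteq> span (brackets X)"
    using brackets_subset_span_brackets[OF assms(3,4)] by (rule span_minimal[OF _ subspace_span])
  then show ?thesis
    using ideal_direct_sum_center_Int_subset[OF assms(1,2)] by blast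
qed

lemma ideal_direct_sum_summand_basis:
  assumes "ideal_direct_sum A B" "A \<noteq> {0}" "lie_center br \<subseteq> span (brackets UNIV)"
  obtains X Y where "X \<subseteq> A" "X \<inter> lie_center br = {}" "X \<noteq> {}" "Y \<subseteq> brackets X"
    "Y \<subseteq> lie_center br \<inter> A" "lie_center br \<inter> A \<subseteq> span Y" "A \<subseteq> span (X \<union> Y)"
    "finite X" "finite Y" "card X + card Y = dim A"
proof -
  let ?Z = "lie_center br"
  have A: "lie_ideal scale br A"
    using assms(1) by (simp add: ideal_direct_sum_def)
  obtain X W where X: "X \<subseteq> A" "X \<inter> ?Z = {}" and W: "W \<subseteq> ?Z \<inter> A" "?Z \<inter> A \<subseteq> span W"
    and XW: "independent (X \<union> W)" "A \<subseteq> span (X \<union> W)"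
    by (rule extend_Int_basis)
  obtain Y where Y: "Y \<subseteq> brackets X" "independent Y" "brackets X \<subseteq> span Y"
    by (rule maximal_independent_subset)
  have "span (brackets X) \<subseteq> span Y"
    using Y(3) by (rule span_minimal[OF _ subspace_span])
  then have ZA_Y: "?Z \<inter> A \<subseteq> span Y"
    using ideal_direct_sum_center_Int_subset_span_brackets[OF assms(1,3) XW(2)] W(1) by blast
  have "X \<noteq> {}"
  proof
    assume "X = {}"
    then have "W \<subseteq> {0}"
      using W(1) ZA_Y Y(1) by (auto simp: brackets_def)
    then have "A \<subseteq> {0}"
      using XW(2) \<open>X = {}\<close> span_mono[of W "{0}"] by auto
    then show False
      using assms(2) subspace_0[OF lie_ideal_subspace[OF A]] by blast
  qed
  have Y_sub: "Y \<subseteq> ?Z \<inter> A"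
    using Y(1) brackets_subset_center_Int_ideal[OF A X(1)] by (rule order_trans)
  then have "card Y = dim (?Z \<inter> A)"
    using ZA_Y Y(2) by (rule basis_card_eq_dim)
  moreover have "card W = dim (?Z \<inter> A)"
    using W independent_mono[OF XW(1)] by (intro basis_card_eq_dim) auto
  moreover have "card (X \<union> W) = dim A"
    using XW X(1) W(1) by (intro basis_card_eq_dim) auto
  moreover have "finite (X \<union> W)" "X \<inter> W = {}"
    using XW(1) X(2) W(1) finiteI_independent by auto
  ultimately have "card X + card Y = dim A"
    by (simp add: card_Un_disjoint)
  moreover have "X \<union> W \<subseteq> span (X \<union> Y)"
    using W(1) ZA_Y span_mono[of Y "X \<union> Y"] span_superset[of "X \<union> Y"] by blast
  then have "A \<subseteq> span (X \<union> Y)"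
    using XW(2) span_minimal[OF _ subspace_span] by blast
  moreover have "finite X" "finite Y"
    using \<open>finite (X \<union> W)\<close> finiteI_independent[OF Y(2)] by auto
  ultimately show ?thesis
    using X \<open>X \<noteq> {}\<close> Y(1) Y_sub ZA_Y by (intro that) auto
qed

lemma ideal_direct_sum_span_Un_eq_UNIV:
  assumes "ideal_direct_sum A B" "A \<subseteq> span S" "B \<subseteq> span T"
  shows "span (S \<union> T) = UNIV"
proof -
  have "v \<in> span (S \<union> T)" for v
  proof -
    obtain a b where ab: "a \<in> A" "b \<in> B" "v = a + b"
      using assms(1) by (rule ideal_direct_sumE)
    then have "a \<in> span (S \<union> T)" "b \<in> span (S \<union> T)"
      using assms(2,3) span_mono[of S "S \<union> T"] span_mono[of T "S \<union> T"] by blast+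
    then show ?thesis
      using ab(3) by (simp add: span_add)
  qed
  then show ?thesis
    by auto
qed

lemma ideal_direct_sum_center_subset_span_Un:
  assumes "ideal_direct_sum A B"
    "lie_center br \<inter> A \<subseteq> span S" "lie_center br \<inter> B \<subseteq> span T"
  shows "lie_center br \<subseteq> span (S \<union> T)"
proof
  fix z assume z: "z \<in> lie_center br"
  obtain a b where ab: "a \<in> A" "b \<in> B" "z = a + b"
    using assms(1) by (rule ideal_direct_sumE)
  then have "a \<in> lie_center br" "b \<in> lie_center br"
    using z ideal_direct_sum_center_component[OF assms(1), of a b]
      ideal_direct_sum_center_component[OF ideal_direct_sum_commute[OF assms(1)], of b a]
    by (simp_all add: add.commute)
  then have "a \<in> span (S \<union> T)" "b \<in> span (S \<union> T)"
    using ab(1,2) assms(2,3) span_mono[of S "S \<union> T"] span_mono[of T "S \<union> T"] by blast+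
  then show "z \<in> span (S \<union> T)"
    using ab(3) by (simp add: span_add)
qed

lemma ideal_direct_sum_basis:
  assumes "ideal_direct_sum A B" "A \<noteq> {0}" "B \<noteq> {0}" "lie_center br \<subseteq> span (brackets UNIV)"
  obtains X Y where "finite X" "finite Y" "X \<inter> Y = {}" "independent (X \<union> Y)"
    "span (X \<union> Y) = UNIV" "span Y = lie_center br" "Y \<subseteq> brackets X"
    "X \<inter> A \<noteq> {}" "X \<inter> B \<noteq> {}" "X \<union> Y \<subseteq> A \<union> B"
    "lie_center br \<inter> A \<subseteq> span (Y \<inter> A)" "lie_center br \<inter> B \<subseteq> span (Y \<inter> B)"
proof -
  let ?Z = "lie_center br"
  obtain XA YA where XA: "XA \<subseteq> A" "XA \<inter> ?Z = {}" "XA \<noteq> {}" and YA: "YA \<subseteq> brackets XA"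
    and YA_sub: "YA \<subseteq> ?Z \<inter> A" and ZA: "?Z \<inter> A \<subseteq> span YA" and spA: "A \<subseteq> span (XA \<union> YA)"
    and finA: "finite XA" "finite YA" and cardA: "card XA + card YA = dim A"
    by (rule ideal_direct_sum_summand_basis[OF assms(1,2,4)])
  obtain XB YB where XB: "XB \<subseteq> B" "XB \<inter> ?Z = {}" "XB \<noteq> {}" and YB: "YB \<subseteq> brackets XB"
    and YB_sub: "YB \<subseteq> ?Z \<inter> B" and ZB: "?Z \<inter> B \<subseteq> span YB" and spB: "B \<subseteq> span (XB \<union> YB)"
    and finB: "finite XB" "finite YB" and cardB: "card XB + card YB = dim B"
    by (rule ideal_direct_sum_summand_basis[OF ideal_direct_sum_commute[OF assms(1)] assms(3,4)])
  define X where "X = XA \<union> XB"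
  define Y where "Y = YA \<union> YB"
  have "X \<union> Y = (XA \<union> YA) \<union> (XB \<union> YB)"
    by (auto simp: X_def Y_def)
  then have span_UNIV: "span (X \<union> Y) = UNIV"
    using ideal_direct_sum_span_Un_eq_UNIV[OF assms(1) spA spB] by simp
  have fin: "finite (X \<union> Y)"
    using finA finB by (simp add: X_def Y_def)
  have "card (X \<union> Y) \<le> card X + card Y"
    by (rule card_Un_le)
  also have "\<dots> \<le> (card XA + card XB) + (card YA + card YB)"
    unfolding X_def Y_def by (intro add_mono card_Un_le)
  also have "\<dots> = dim (UNIV :: 'v set)"
    using cardA cardB ideal_direct_sum_dim[OF assms(1)] by simp
  finally have indep: "independent (X \<union> Y)"
    using fin span_UNIV by (intro card_le_dim_spanning[of _ UNIV]) auto
  have "?Z \<subseteq> span Y"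
    unfolding Y_def using assms(1) ZA ZB by (rule ideal_direct_sum_center_subset_span_Un)
  moreover have "span Y \<subseteq> ?Z"
    using YA_sub YB_sub unfolding Y_def by (intro span_minimal[OF _ subspace_lie_center]) auto
  ultimately have span_Y: "span Y = ?Z"
    by (rule antisym[rotated])
  have "Y \<subseteq> brackets X"
    using YA YB brackets_mono[of XA X] brackets_mono[of XB X] by (auto simp: X_def Y_def)
  moreover have "?Z \<inter> A \<subseteq> span (Y \<inter> A)" "?Z \<inter> B \<subseteq> span (Y \<inter> B)"
    using ZA ZB YA_sub YB_sub span_mono[of YA "Y \<inter> A"] span_mono[of YB "Y \<inter> B"]
    by (auto simp: Y_def)
  moreover have "X \<inter> Y = {}" "X \<inter> A \<noteq> {}" "X \<inter> B \<noteq> {}" "X \<union> Y \<subseteq> A \<union> B"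
    using XA XB YA_sub YB_sub by (auto simp: X_def Y_def)
  ultimately show ?thesis
    using fin indep span_UNIV span_Y by (intro that) auto
qed

lemma adapted_bases_center_basis:
  assumes "adapted_bases scale br q p x y"
  shows "independent (y ` {..<p})" "span (y ` {..<p}) = lie_center br" "inj_on y {..<p}"
  using assms independent_mono unfolding adapted_bases_def by auto

lemma adapted_bases_dim:
  assumes "adapted_bases scale br q p x y"
  shows "dim (UNIV :: 'v set) = q + p" "dim (lie_center br) = p"
proof -
  have "card (x ` {..<q} \<union> y ` {..<p}) = dim (UNIV :: 'v set)"
    using assms unfolding adapted_bases_def by (intro basis_card_eq_dim) auto
  then show "dim (UNIV :: 'v set) = q + p"
    using assms unfolding adapted_bases_def by (simp add: card_Un_disjoint card_image)
  show "dim (lie_center br) = p"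
    using adapted_bases_center_basis[OF assms]
    by (metis card_image card_lessThan dim_span dim_eq_card_independent)
qed

lemma bracket_eq_sum_bracket_coeff:
  assumes "adapted_bases scale br q p x y"
  shows "br (x i) (x j) = (\<Sum>k<p. bracket_coeff scale br p x y i j k *s y k)"
proof -
  note center_basis = adapted_bases_center_basis[OF assms]
  have "br (x i) (x j) =
      (\<Sum>b\<in>y ` {..<p}. representation (y ` {..<p}) (br (x i) (x j)) b *s b)"
    using center_basis(2) bracket_in_center
    by (intro sum_representation_eq[OF center_basis(1), symmetric]) auto
  also have "\<dots> = (\<Sum>k<p. bracket_coeff scale br p x y i j k *s y k)"
    by (simp add: sum.reindex[OF center_basis(3)] bracket_coeff_def)
  finally show ?thesis .
qed

lemma center_subset_span_brackets:
  assumes "adapted_bases scale br q p x y" "three_vertex_condition scale br q p x y"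
  shows "lie_center br \<subseteq> span (brackets UNIV)"
proof -
  have "y k \<in> span (brackets UNIV)" if k: "k < p" for k
  proof -
    obtain i j where single: "{k'. k' < p \<and> bracket_coeff scale br p x y i j k' \<noteq> 0} = {k}"
      using assms(2) k unfolding three_vertex_condition_def by blast
    let ?c = "bracket_coeff scale br p x y i j"
    have zero: "?c k' = 0" if "k' < p" "k' \<noteq> k" for k'
      using single that by blast
    have nonzero: "?c k \<noteq> 0"
      using single by blast
    have "br (x i) (x j) = (\<Sum>k'<p. if k' = k then ?c k *s y k else 0)"
      unfolding bracket_eq_sum_bracket_coeff[OF assms(1)] by (rule sum.cong) (auto simp: zero)
    also have "\<dots> = ?c k *s y k"
      using k by simp
    finally have "inverse (?c k) *s br (x i) (x j) = y k"
      using nonzero by simp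
    moreover have "br (x i) (x j) \<in> span (brackets UNIV)"
      by (rule span_base) (auto simp: brackets_def)
    ultimately show ?thesis
      using span_scale by metis
  qed
  then have "span (y ` {..<p}) \<subseteq> span (brackets UNIV)"
    by (intro span_minimal[OF _ subspace_span]) auto
  then show ?thesis
    using adapted_bases_center_basis(2)[OF assms(1)] by simp
qed

lemma three_vertex_condition_if_basis_brackets:
  assumes "adapted_bases scale br q p x y" "y ` {..<p} \<subseteq> brackets (x ` {..<q})"
  shows "three_vertex_condition scale br q p x y"
  unfolding three_vertex_condition_def
proof (intro allI impI)
  fix k assume k: "k < p"
  then have "y k \<in> brackets (x ` {..<q})"
    using assms(2) by blast
  then obtain a b where ab: "a \<in> x ` {..<q}" "b \<in> x ` {..<q}" "y k = br a b"
    by (auto simp: brackets_def)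
  then obtain i j where ij: "i < q" "j < q" "br (x i) (x j) = y k"
    by auto
  note center_basis = adapted_bases_center_basis[OF assms(1)]
  have "bracket_coeff scale br p x y i j k' = (if y k' = y k then 1 else 0)" for k'
    using representation_basis[OF center_basis(1)] k ij(3) by (simp add: bracket_coeff_def)
  moreover have "y k' = y k \<longleftrightarrow> k' = k" if "k' < p" for k'
    using center_basis(3) k that by (auto dest: inj_onD)
  ultimately have "{k'. k' < p \<and> bracket_coeff scale br p x y i j k' \<noteq> 0} = {k}"
    using k by auto
  then show "\<exists>i<q. \<exists>j<q. {k'. k' < p \<and> bracket_coeff scale br p x y i j k' \<noteq> 0} = {k}"
    using ij by blast
qed

lemma adapted_bases_reindex:
  assumes "adapted_bases scale br q p x y" "finite X" "finite Y" "X \<inter> Y = {}"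
    "independent (X \<union> Y)" "span (X \<union> Y) = UNIV" "span Y = lie_center br"
  obtains x' y' where "adapted_bases scale br q p x' y'" "x' ` {..<q} = X" "y' ` {..<p} = Y"
proof -
  have "card (X \<union> Y) = dim (UNIV :: 'v set)"
    using assms(5,6) by (intro basis_card_eq_dim) auto
  then have "card (X \<union> Y) = q + p"
    using adapted_bases_dim(1)[OF assms(1)] by simp
  moreover have "card Y = p"
    using assms(7) adapted_bases_dim(2)[OF assms(1)] independent_mono[OF assms(5)]
    by (metis Un_upper2 dim_span dim_eq_card_independent)
  ultimately have "card X = q"
    using assms(2-4) by (simp add: card_Un_disjoint)
  then obtain x' y' where x': "bij_betw x' {..<q} X" and y': "bij_betw y' {..<p} Y"
    using ex_bij_betw_nat_finite[OF assms(2)] ex_bij_betw_nat_finite[OF assms(3)] \<open>card Y = p\<close>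
    by (metis atLeast0LessThan)
  then have images: "x' ` {..<q} = X" "y' ` {..<p} = Y" and "inj_on x' {..<q}" "inj_on y' {..<p}"
    unfolding bij_betw_def by blast+
  then have "adapted_bases scale br q p x' y'"
    using assms(4-7) by (simp add: adapted_bases_def)
  then show ?thesis
    using images by (rule that)
qed

lemma bracket_coeff_nonzero_in_ideal:
  assumes "adapted_bases scale br q p x y" "lie_ideal scale br J"
    "lie_center br \<inter> J \<subseteq> span (y ` {..<p} \<inter> J)"
    "x j \<in> J" "bracket_coeff scale br p x y i j k \<noteq> 0"
  shows "y k \<in> J"
proof -
  let ?c = "br (x i) (x j)"
  have "?c \<in> span (y ` {..<p} \<inter> J)"
    using assms(3) bracket_in_center lie_ideal_bracket_right[OF assms(2,4)] by blast
  then have "representation (y ` {..<p}) ?c = representation (y ` {..<p} \<inter> J) ?c"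
    using adapted_bases_center_basis(1)[OF assms(1)] by (intro representation_extend) auto
  then have "representation (y ` {..<p} \<inter> J) ?c (y k) \<noteq> 0"
    using assms(5) by (simp add: bracket_coeff_def)
  then show ?thesis
    using representation_ne_zero by blast
qed

lemma bracket_in_span_bracket_coeff_support:
  assumes "adapted_bases scale br q p x y"
  shows "br (x i) (x j) \<in> span (y ` {k. k < p \<and> bracket_coeff scale br p x y i j k \<noteq> 0})"
  unfolding bracket_eq_sum_bracket_coeff[OF assms]
proof (intro span_sum)
  fix k assume "k \<in> {..<p}"
  then show "bracket_coeff scale br p x y i j k *s y k
      \<in> span (y ` {k. k < p \<and> bracket_coeff scale br p x y i j k \<noteq> 0})"
    by (cases "bracket_coeff scale br p x y i j k = 0") (auto simp: span_zero intro: span_scale span_base)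
qed

lemma lie_ideal_span_separated_vertices:
  assumes ab: "adapted_bases scale br q p x y" and K: "K \<subseteq> gen_vertices q p"
    and sep: "\<forall>e\<in>gen_hyperedges scale br q p x y. e \<subseteq> K \<or> e \<inter> K = {}"
  shows "lie_ideal scale br (span (case_sum x y ` K))"
proof (rule lie_ideal_spanI)
  let ?f = "case_sum x y"
  show "span (?f ` gen_vertices q p) = UNIV"
    using ab by (simp add: image_case_sum_gen_vertices adapted_bases_def)
  have center: "y k \<in> lie_center br" if "k < p" for k
    using that adapted_bases_center_basis(2)[OF ab] span_base[of "y k" "y ` {..<p}"] by auto
  have "br (?f v) (?f w) \<in> span (?f ` K)" if v: "v \<in> gen_vertices q p" and w: "w \<in> K" for v w
  proof (cases "\<exists>i j. v = Inl i \<and> w = Inl j")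
    case True
    then obtain i j where ij: "v = Inl i" "w = Inl j" "i < q" "j < q"
      using v w K by (auto simp: gen_vertices_def)
    let ?S = "{k. k < p \<and> bracket_coeff scale br p x y i j k \<noteq> 0}"
    have "Inr ` ?S \<subseteq> K"
      using sep ij(3,4) w ij(2) by (intro bracket_coeff_support_subset_separated) auto
    then have "y ` ?S \<subseteq> ?f ` K"
      using image_mono[of "Inr ` ?S" K ?f] by (simp add: image_image)
    then have "span (y ` ?S) \<subseteq> span (?f ` K)"
      by (rule span_mono)
    then show ?thesis
      using bracket_in_span_bracket_coeff_support[OF ab, of i j] ij by auto
  next
    case False
    then have "?f v \<in> lie_center br \<or> ?f w \<in> lie_center br"
      using v w K center by (cases v; cases w) (auto simp: gen_vertices_def)
    then show ?thesis
      using bracket_center_left bracket_center_right span_zero by auto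
  qed
  then show "br u w \<in> span (?f ` K)" if "u \<in> ?f ` gen_vertices q p" "w \<in> ?f ` K" for u w
    using that by blast
qed

lemma decomposable_if_basis_split:
  assumes "independent (S \<union> T)" "S \<inter> T = {}" "span (S \<union> T) = UNIV" "S \<noteq> {}" "T \<noteq> {}"
    "lie_ideal scale br (span S)" "lie_ideal scale br (span T)"
  shows "decomposable scale br"
proof -
  have "span U \<noteq> {0}" if U: "U \<noteq> {}" "U \<subseteq> S \<union> T" for U
  proof -
    obtain u where "u \<in> U"
      using U(1) by blast
    moreover have "0 \<notin> U"
      using U(2) assms(1) dependent_zero by blast
    ultimately show ?thesis
      using span_base[of u U] by auto
  qed
  then show ?thesis
    unfolding decomposable_def using assms span_Int_span_eq_zero[OF assms(1,2)]
    by (intro exI[of _ "span S"] exI[of _ "span T"]) (auto simp: span_Un[symmetric])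
qed

lemma decomposable_if_not_hypergraph_connected:
  assumes ab: "adapted_bases scale br q p x y"
    and "\<not> hypergraph_connected (gen_vertices q p) (gen_hyperedges scale br q p x y)"
  shows "decomposable scale br"
proof -
  let ?V = "gen_vertices q p" and ?E = "gen_hyperedges scale br q p x y" and ?f = "case_sum x y"
  obtain K where K: "K \<subseteq> ?V" "K \<noteq> {}" "K \<noteq> ?V" and sep: "\<forall>e\<in>?E. e \<subseteq> K \<or> e \<inter> K = {}"
    using assms(2) unfolding not_hypergraph_connected_gen_iff by blast
  have "e \<subseteq> ?V - K \<or> e \<inter> (?V - K) = {}" if "e \<in> ?E" for e
  proof -
    have "e \<subseteq> ?V"
      using that by (rule gen_hyperedges_subset_vertices)
    moreover have "e \<subseteq> K \<or> e \<inter> K = {}"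
      using sep that by (rule bspec)
    ultimately show ?thesis
      by blast
  qed
  then have ideals: "lie_ideal scale br (span (?f ` K))" "lie_ideal scale br (span (?f ` (?V - K)))"
    by (intro lie_ideal_span_separated_vertices[OF ab] K(1) sep Diff_subset ballI; assumption)+
  have inj: "inj_on ?f ?V"
    using ab unfolding adapted_bases_def by (intro inj_on_case_sum_gen_vertices) auto
  have "?f ` K \<union> ?f ` (?V - K) = ?f ` ?V"
    using K(1) by blast
  then have basis: "independent (?f ` K \<union> ?f ` (?V - K))" "span (?f ` K \<union> ?f ` (?V - K)) = UNIV"
    using ab by (simp_all add: image_case_sum_gen_vertices adapted_bases_def)
  have "?f ` K \<inter> ?f ` (?V - K) = {}"
    using inj_on_image_set_diff[OF inj Diff_subset K(1)] by blast
  moreover have "?f ` K \<noteq> {}" "?f ` (?V - K) \<noteq> {}"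
    using K by blast+
  ultimately show ?thesis
    using basis ideals by (intro decomposable_if_basis_split)
qed

lemma hyperedge_image_subset_ideal:
  assumes ab: "adapted_bases scale br q p x y" and AB: "ideal_direct_sum A B"
    and "x ` {..<q} \<subseteq> A \<union> B"
    and ZA: "lie_center br \<inter> A \<subseteq> span (y ` {..<p} \<inter> A)"
    and ZB: "lie_center br \<inter> B \<subseteq> span (y ` {..<p} \<inter> B)"
    and "e \<in> gen_hyperedges scale br q p x y"
  shows "case_sum x y ` e \<subseteq> A \<or> case_sum x y ` e \<subseteq> B"
proof -
  have A: "lie_ideal scale br A" and B: "lie_ideal scale br B"
    using AB by (simp_all add: ideal_direct_sum_def)
  obtain i j where ij: "i < q" "j < q" and coeff: "\<exists>k<p. bracket_coeff scale br p x y i j k \<noteq> 0"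
    and e: "e = {Inl i, Inl j} \<union> Inr ` {k. k < p \<and> bracket_coeff scale br p x y i j k \<noteq> 0}"
    using assms(6) by (rule gen_hyperedgesE)
  have "br (x i) (x j) \<noteq> 0"
    using coeff by (auto simp: bracket_coeff_def representation_zero)
  moreover have "x i \<in> A \<union> B" "x j \<in> A \<union> B"
    using assms(3) ij by auto
  ultimately consider "x i \<in> A" "x j \<in> A" | "x i \<in> B" "x j \<in> B"
    using ideal_direct_sum_bracket_eq_zero[OF AB]
      ideal_direct_sum_bracket_eq_zero[OF ideal_direct_sum_commute[OF AB]] by auto
  then show ?thesis
  proof cases
    case 1
    then show ?thesis
      using bracket_coeff_nonzero_in_ideal[OF ab A ZA 1(2)] e by auto
  next
    case 2
    then show ?thesis
      using bracket_coeff_nonzero_in_ideal[OF ab B ZB 2(2)] e by auto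
  qed
qed

lemma not_hypergraph_connected_if_ideal_direct_sum:
  assumes ab: "adapted_bases scale br q p x y" and AB: "ideal_direct_sum A B"
    and basis: "x ` {..<q} \<union> y ` {..<p} \<subseteq> A \<union> B"
    and ZA: "lie_center br \<inter> A \<subseteq> span (y ` {..<p} \<inter> A)"
    and ZB: "lie_center br \<inter> B \<subseteq> span (y ` {..<p} \<inter> B)"
    and i: "i < q" "x i \<in> A" and j: "j < q" "x j \<in> B"
  shows "\<not> hypergraph_connected (gen_vertices q p) (gen_hyperedges scale br q p x y)"
proof -
  let ?V = "gen_vertices q p" and ?E = "gen_hyperedges scale br q p x y" and ?f = "case_sum x y"
  have not_in_A: "?f v \<notin> A" if "v \<in> ?V" "?f v \<in> B" for v
  proof
    assume "?f v \<in> A"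
    then have "?f v = 0"
      using that(2) AB by (auto simp: ideal_direct_sum_def)
    moreover have "?f v \<in> x ` {..<q} \<union> y ` {..<p}"
      using imageI[OF that(1), of ?f] by (simp add: image_case_sum_gen_vertices)
    ultimately show False
      using ab dependent_zero unfolding adapted_bases_def by metis
  qed
  define K where "K = {v \<in> ?V. ?f v \<in> A}"
  have "e \<subseteq> K \<or> e \<inter> K = {}" if e: "e \<in> ?E" for e
    using hyperedge_image_subset_ideal[OF ab AB _ ZA ZB e] basis not_in_A
      gen_hyperedges_subset_vertices[OF e] unfolding K_def by blast
  moreover have "Inl i \<in> K" "Inl j \<in> ?V" "Inl j \<notin> K"
    using i j not_in_A[of "Inl j"] by (auto simp: K_def gen_vertices_def)
  moreover have "K \<subseteq> ?V"
    by (auto simp: K_def)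
  ultimately have "\<exists>K\<subseteq>?V. K \<noteq> {} \<and> K \<noteq> ?V \<and> (\<forall>e\<in>?E. e \<subseteq> K \<or> e \<inter> K = {})"
    by (intro exI[of _ K]) blast
  then show ?thesis
    unfolding not_hypergraph_connected_gen_iff .
qed

lemma not_hypergraph_connected_if_decomposable:
  assumes ab: "adapted_bases scale br q p x y" and "three_vertex_condition scale br q p x y"
    and "decomposable scale br"
  obtains x' y' where "adapted_bases scale br q p x' y'" "three_vertex_condition scale br q p x' y'"
    "\<not> hypergraph_connected (gen_vertices q p) (gen_hyperedges scale br q p x' y')"
proof -
  obtain A B where AB: "ideal_direct_sum A B" "A \<noteq> {0}" "B \<noteq> {0}"
    using assms(3) decomposable_iff_ideal_direct_sum by blast
  obtain X Y where XY: "finite X" "finite Y" "X \<inter> Y = {}" "independent (X \<union> Y)"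
      "span (X \<union> Y) = UNIV" "span Y = lie_center br"
    and Y: "Y \<subseteq> brackets X" and X: "X \<inter> A \<noteq> {}" "X \<inter> B \<noteq> {}"
    and in_AB: "X \<union> Y \<subseteq> A \<union> B"
    and ZA: "lie_center br \<inter> A \<subseteq> span (Y \<inter> A)" and ZB: "lie_center br \<inter> B \<subseteq> span (Y \<inter> B)"
    by (rule ideal_direct_sum_basis[OF AB center_subset_span_brackets[OF assms(1,2)]])
  obtain x' y' where ab': "adapted_bases scale br q p x' y'"
    and x': "x' ` {..<q} = X" and y': "y' ` {..<p} = Y"
    by (rule adapted_bases_reindex[OF ab XY])
  have "three_vertex_condition scale br q p x' y'"
    using Y x' y' by (intro three_vertex_condition_if_basis_brackets[OF ab']) simp
  moreover obtain i j where "i < q" "x' i \<in> A" "j < q" "x' j \<in> B"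
    using X x' by blast
  then have "\<not> hypergraph_connected (gen_vertices q p) (gen_hyperedges scale br q p x' y')"
    using ZA ZB in_AB x' y'
    by (intro not_hypergraph_connected_if_ideal_direct_sum[OF ab' AB(1)]) simp_all
  ultimately show ?thesis
    using ab' that by blast
qed

end

theorem proposition3:
  fixes s :: "complex \<Rightarrow> 'v::ab_group_add \<Rightarrow> 'v"
    and br :: "'v \<Rightarrow> 'v \<Rightarrow> 'v"
    and q p :: nat
    and x y :: "nat \<Rightarrow> 'v"
  assumes "lie_algebra s br"
    and "two_step_nilpotent br"
    and "q \<ge> 2" and "p \<ge> 2"
    and "adapted_bases s br q p x y"
    and "three_vertex_condition s br q p x y"
  shows "decomposable s br \<longleftrightarrow>
    (\<exists>x' y'. adapted_bases s br q p x' y' \<and> three_vertex_condition s br q p x' y' \<and>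
       \<not> hypergraph_connected (gen_vertices q p) (gen_hyperedges s br q p x' y'))"
proof -
  have "two_step_lie_algebra s (x ` {..<q} \<union> y ` {..<p}) br"
    using assms(1,2,5)
    unfolding two_step_lie_algebra_def two_step_lie_algebra_axioms_def
      finite_dimensional_vector_space_def finite_dimensional_vector_space_axioms_def
    by (simp add: lie_algebra_def two_step_nilpotent_def adapted_bases_def)
  then interpret two_step_lie_algebra s "x ` {..<q} \<union> y ` {..<p}" br .
  show ?thesis
  proof
    assume "decomposable s br"
    then obtain x' y' where "adapted_bases s br q p x' y'" "three_vertex_condition s br q p x' y'"
      "\<not> hypergraph_connected (gen_vertices q p) (gen_hyperedges s br q p x' y')"
      by (rule not_hypergraph_connected_if_decomposable[OF assms(5,6)])
    then show "\<exists>x' y'. adapted_bases s br q p x' y' \<and> three_vertex_condition s br q p x' y' \<and>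
        \<not> hypergraph_connected (gen_vertices q p) (gen_hyperedges s br q p x' y')"
      by blast
  next
    assume "\<exists>x' y'. adapted_bases s br q p x' y' \<and> three_vertex_condition s br q p x' y' \<and>
        \<not> hypergraph_connected (gen_vertices q p) (gen_hyperedges s br q p x' y')"
    then obtain x' y' where "adapted_bases s br q p x' y'"
      "\<not> hypergraph_connected (gen_vertices q p) (gen_hyperedges s br q p x' y')"
      by blast
    then show "decomposable s br"
      by (rule decomposable_if_not_hypergraph_connected)
  qed
qed

end
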